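(* Let $\mathscr{a}\in\mathbb{R}$, $\mathscr{b}\in(\mathscr{a},\infty)$, for $\theta=(\theta_1,\theta_2,\theta_3,\theta_4)\in\mathbb{R}^4$ and $x\in\mathbb{R}$ let $\mathscr{N}^\theta(x)=\theta_3\max\{\theta_1x+\theta_2,0\}+\theta_4$ and $I^\theta=\{x\in[\mathscr{a},\mathscr{b}]\colon\theta_1x+\theta_2>0\}$, let $\lambda$ be the Lebesgue–Borel measure on $\mathbb{R}$, and let $(\theta_n)_{n\in\mathbb{N}}\subseteq\mathbb{R}^4$, $\theta_n=(\theta_{n,1},\theta_{n,2},\theta_{n,3},\theta_{n,4})$, and $h\in C([\mathscr{a},\mathscr{b}],\mathbb{R})$ satisfy $\lim_{n\to\infty}\sup_{x\in[\mathscr{a},\mathscr{b}]}|\mathscr{N}^{\theta_n}(x)-h(x)|=0$, where $h$ is not constant. Then there exists $\vartheta=(\vartheta_1,\dots,\vartheta_4)\in\mathbb{R}^4$ such that $\mathscr{N}^\vartheta|_{[\mathscr{a},\mathscr{b}]}=h$, $\lim_{n\to\infty}|\theta_{n,1}\theta_{n,3}-\vartheta_1\vartheta_3|=0$, and $\lim_{n\to\infty}\lambda(I^{\theta_n}\,\Delta\,I^\vartheta)=0$.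
   Context: $A\,\Delta\,B$ denotes the symmetric difference of sets. *)

theory Defs
  imports "HOL-Analysis.Analysis"
begin

definition ann :: "real^4 \<Rightarrow> real \<Rightarrow> real" where
  "ann \<theta> x = \<theta>$3 * max (\<theta>$1 * x + \<theta>$2) 0 + \<theta>$4"

definition active_set :: "real \<Rightarrow> real \<Rightarrow> real^4 \<Rightarrow> real set" where
  "active_set a b \<theta> = {x \<in> {a..b}. \<theta>$1 * x + \<theta>$2 > 0}"

definition symdiff :: "'a set \<Rightarrow> 'a set \<Rightarrow> 'a set" where
  "symdiff A B = (A - B) \<union> (B - A)"

end

theory Submission
  imports Defs
begin

(* On [a, b] every network equals N(a) + theta_1 theta_3 rho_p for a ramp rho_p whose
   parameter p in [0, 2 (b - a)] encodes position and orientation of the kink; rho_p depends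
   1-Lipschitz on p, satisfies 0 <= rho_p <= rho_p(b) and has integral p rho_p(b) / 2.
   So s_n rho_(p_n), with s_n = theta_(n,1) theta_(n,3), converges uniformly to H = h - h(a).
   In the limit H (H(b) - H) >= 0, hence H(b) \<noteq> 0 as h is not constant, and integrating
   gives p_n --> p = 2 (integral of H) / H(b).  As H / H(b) is continuous, [0, 1]-valued and
   runs from 0 to 1, p lies strictly inside (0, 2 (b - a)); so rho_p(b) > 0 and s_n converges
   to some S.  The limit h(a) + S rho_p is itself a network, and its active set differs from
   that of theta_n by a set of measure at most |p_n - p|. *)

(* For p from 0 to b - a the kink b - p of the rising ramp moves from b to a; for p from b - a
   to 2 (b - a) the kink 2 b - a - p of the capped ramp moves back from b to a.  ramp_set a b p
   is the corresponding active set. *)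
definition ramp :: "real \<Rightarrow> real \<Rightarrow> real \<Rightarrow> real \<Rightarrow> real" where
  "ramp a b p x = (if p \<le> b - a then max (x - (b - p)) 0 else min (x - a) (2 * (b - a) - p))"

definition ramp_set :: "real \<Rightarrow> real \<Rightarrow> real \<Rightarrow> real set" where
  "ramp_set a b p = (if p \<le> b - a then {b - p<..b} else {a..<2 * b - a - p})"

lemma ramp_left_end: "p \<le> 2 * (b - a) \<Longrightarrow> ramp a b p a = 0"
  by (simp add: ramp_def)

lemma ramp_right_end_pos: "0 < p \<Longrightarrow> p < 2 * (b - a) \<Longrightarrow> 0 < ramp a b p b"
  by (simp add: ramp_def)

lemma ramp_bounds:
  "x \<in> {a..b} \<Longrightarrow> 0 \<le> p \<Longrightarrow> p \<le> 2 * (b - a) \<Longrightarrow> 0 \<le> ramp a b p x \<and> ramp a b p x \<le> ramp a b p b"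
  by (auto simp: ramp_def)

lemma lipschitz_ramp: "x \<in> {a..b} \<Longrightarrow> 1-lipschitz_on UNIV (\<lambda>p. ramp a b p x)"
  by (rule lipschitz_onI) (auto simp: ramp_def dist_real_def)

lemma tendsto_ramp: "x \<in> {a..b} \<Longrightarrow> P \<longlonglongrightarrow> p \<Longrightarrow> (\<lambda>n. ramp a b (P n) x) \<longlonglongrightarrow> ramp a b p x"
  by (rule isCont_tendsto_compose[OF lipschitz_on_continuous_within[OF lipschitz_ramp]]) auto

lemma has_integral_minus_lower_bound:
  fixes c d :: real
  assumes "c \<le> d"
  shows "((\<lambda>x. x - c) has_integral (d - c)\<^sup>2 / 2) {c..d}"
proof -
  have "((\<lambda>x. x - c) has_integral (d\<^sup>2 - c\<^sup>2) / 2 - (d - c) * c) {c..d}"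
    using has_integral_diff[OF ident_has_integral[OF assms] has_integral_const_real[of c c d]] assms
    by simp
  moreover have "(d\<^sup>2 - c\<^sup>2) / 2 - (d - c) * c = (d - c)\<^sup>2 / 2"
    by (simp add: power2_eq_square field_simps)
  ultimately show ?thesis by simp
qed

lemma has_integral_ramp:
  assumes "0 \<le> p" "p \<le> 2 * (b - a)"
  shows "(ramp a b p has_integral p * ramp a b p b / 2) {a..b}"
proof (cases "p \<le> b - a")
  case True
  define c where "c = b - p"
  have c: "a \<le> c" "c \<le> b" using True assms by (auto simp: c_def)
  have "(ramp a b p has_integral 0) {a..c}"
    by (rule has_integral_eq[OF _ has_integral_0]) (auto simp: ramp_def True c_def)
  moreover have "(ramp a b p has_integral (b - c)\<^sup>2 / 2) {c..b}"
    by (rule has_integral_eq[OF _ has_integral_minus_lower_bound[OF c(2)]]) (auto simp: ramp_def True c_def)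
  ultimately have "(ramp a b p has_integral 0 + (b - c)\<^sup>2 / 2) {a..b}"
    by (rule has_integral_combine[OF c])
  then show ?thesis using True assms by (simp add: ramp_def c_def power2_eq_square)
next
  case False
  define c where "c = 2 * b - a - p"
  have c: "a \<le> c" "c \<le> b" using False assms by (auto simp: c_def)
  have "(ramp a b p has_integral (c - a)\<^sup>2 / 2) {a..c}"
    by (rule has_integral_eq[OF _ has_integral_minus_lower_bound[OF c(1)]]) (auto simp: ramp_def False c_def)
  moreover have "((\<lambda>x. c - a) has_integral (b - c) * (c - a)) {c..b}"
    using has_integral_const_real[of "c - a" c b] c by simp
  then have "(ramp a b p has_integral (b - c) * (c - a)) {c..b}"
    by (rule has_integral_eq[rotated]) (auto simp: ramp_def False c_def)
  ultimately have "(ramp a b p has_integral (c - a)\<^sup>2 / 2 + (b - c) * (c - a)) {a..b}"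
    by (rule has_integral_combine[OF c])
  moreover have "(c - a)\<^sup>2 / 2 + (b - c) * (c - a) = p * ramp a b p b / 2"
    using False by (simp add: ramp_def c_def power2_eq_square field_simps)
  ultimately show ?thesis by metis
qed

lemma relu_diff_clamp:
  fixes a b k x :: real
  assumes "x \<in> {a..b}"
  shows "max (x - k) 0 - max (a - k) 0 = max (x - max a (min b k)) 0"
    and "max (k - a) 0 - max (k - x) 0 = min (x - a) (max a (min b k) - a)"
  using assms by (auto simp: max_def min_def)

lemma clamp_less_iff: "x \<in> {a<..b} \<Longrightarrow> max a (min b k) < x \<longleftrightarrow> k < x"
  and less_clamp_iff: "x \<in> {a..<b} \<Longrightarrow> x < max a (min b k) \<longleftrightarrow> x < k"
  for x a b k :: real
  by (auto simp: max_def min_def)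

lemma mem_ramp_set_interior:
  assumes "a \<le> t" "t \<le> b" "x \<in> {a<..<b}"
  shows "x \<in> ramp_set a b (b - t) \<longleftrightarrow> t < x"
    and "x \<in> ramp_set a b (2 * b - a - t) \<longleftrightarrow> x < t"
  using assms by (auto simp: ramp_set_def)

(* The end points a and b are exceptional when the kink lies outside (a, b). *)
lemma ann_eq_ramp:
  assumes "a < b"
  shows "\<exists>p \<in> {0..2 * (b - a)}. (\<forall>x \<in> {a..b}. ann \<theta> x = ann \<theta> a + \<theta>$1 * \<theta>$3 * ramp a b p x)
           \<and> symdiff (active_set a b \<theta>) (ramp_set a b p) \<subseteq> {a, b}"
proof -
  define k where "k = - \<theta>$2 / \<theta>$1"
  define t where "t = max a (min b k)"
  have t: "a \<le> t" "t \<le> b"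
    using assms by (auto simp: t_def)
  consider "\<theta>$1 > 0" | "\<theta>$1 < 0" | "\<theta>$1 = 0" "\<theta>$2 > 0" | "\<theta>$1 = 0" "\<theta>$2 \<le> 0"
    by linarith
  then show ?thesis
  proof cases
    case 1
    have lin: "\<theta>$1 * x + \<theta>$2 = \<theta>$1 * (x - k)" for x
      using 1 by (simp add: k_def field_simps)
    have relu: "max (\<theta>$1 * x + \<theta>$2) 0 = \<theta>$1 * max (x - k) 0" for x
      using 1 by (simp add: lin max_mult_distrib_left)
    have active: "\<theta>$1 * x + \<theta>$2 > 0 \<longleftrightarrow> k < x" for x
      using 1 by (simp add: lin zero_less_mult_iff)
    show ?thesis
    proof (intro bexI[of _ "b - t"] conjI ballI)
      fix x assume x: "x \<in> {a..b}"
      have "ramp a b (b - t) x = max (x - t) 0"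
        using t by (simp add: ramp_def)
      then show "ann \<theta> x = ann \<theta> a + \<theta>$1 * \<theta>$3 * ramp a b (b - t) x"
        using relu_diff_clamp(1)[OF x, of k] unfolding ann_def relu t_def
        by (simp add: algebra_simps flip: right_diff_distrib)
    next
      show "symdiff (active_set a b \<theta>) (ramp_set a b (b - t)) \<subseteq> {a, b}"
      proof
        fix x assume x: "x \<in> symdiff (active_set a b \<theta>) (ramp_set a b (b - t))"
        show "x \<in> {a, b}"
        proof (rule ccontr)
          assume "x \<notin> {a, b}"
          moreover have "x \<in> {a..b}"
            using x t by (auto simp: symdiff_def active_set_def ramp_set_def split: if_splits)
          ultimately have "x \<in> {a<..<b}" "x \<in> {a<..b}" "x \<in> {a..<b}"
            by auto
          then show False
            using x clamp_less_iff[of x a b k] mem_ramp_set_interior(1)[OF t]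
            by (auto simp: symdiff_def active_set_def active t_def)
        qed
      qed
    qed (use t in auto)
  next
    case 2
    have lin: "\<theta>$1 * x + \<theta>$2 = - \<theta>$1 * (k - x)" for x
      using 2 by (simp add: k_def field_simps)
    have relu: "max (\<theta>$1 * x + \<theta>$2) 0 = - \<theta>$1 * max (k - x) 0" for x
      using 2 by (simp add: lin max_mult_distrib_left)
    have active: "\<theta>$1 * x + \<theta>$2 > 0 \<longleftrightarrow> x < k" for x
      using 2 by (simp add: lin mult_less_0_iff)
    show ?thesis
    proof (intro bexI[of _ "2 * b - a - t"] conjI ballI)
      fix x assume x: "x \<in> {a..b}"
      have "ramp a b (2 * b - a - t) x = min (x - a) (t - a)"
        using t x by (auto simp: ramp_def)
      then show "ann \<theta> x = ann \<theta> a + \<theta>$1 * \<theta>$3 * ramp a b (2 * b - a - t) x"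
        using relu_diff_clamp(2)[OF x, of k] unfolding ann_def relu t_def
        by (simp add: algebra_simps flip: right_diff_distrib)
    next
      show "symdiff (active_set a b \<theta>) (ramp_set a b (2 * b - a - t)) \<subseteq> {a, b}"
      proof
        fix x assume x: "x \<in> symdiff (active_set a b \<theta>) (ramp_set a b (2 * b - a - t))"
        show "x \<in> {a, b}"
        proof (rule ccontr)
          assume "x \<notin> {a, b}"
          moreover have "x \<in> {a..b}"
            using x t by (auto simp: symdiff_def active_set_def ramp_set_def split: if_splits)
          ultimately have "x \<in> {a<..<b}" "x \<in> {a<..b}" "x \<in> {a..<b}"
            by auto
          then show False
            using x less_clamp_iff[of x a b k] mem_ramp_set_interior(2)[OF t]
            by (auto simp: symdiff_def active_set_def active t_def)
        qed
      qed
    qed (use t in auto)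
  next
    case 3
    then show ?thesis
      using assms by (intro bexI[of _ "b - a"]) (auto simp: ann_def symdiff_def active_set_def ramp_set_def)
  next
    case 4
    then show ?thesis
      using assms by (intro bexI[of _ 0]) (auto simp: ann_def symdiff_def active_set_def ramp_set_def ramp_def)
  qed
qed

lemma ann_ramp_network:
  "\<exists>\<eta> :: real^4. ann \<eta> = (\<lambda>x. c + S * ramp a b p x) \<and> \<eta>$1 * \<eta>$3 = S
     \<and> active_set a b \<eta> = ramp_set a b p"
proof (cases "p \<le> b - a")
  case True
  define \<eta> :: "real^4" where "\<eta> = vector [1, p - b, S, c]"
  have "\<eta>$1 = 1" "\<eta>$2 = p - b" "\<eta>$3 = S" "\<eta>$4 = c"
    by (simp_all add: \<eta>_def vector_def)
  then show ?thesis
    using True by (intro exI[of _ \<eta>]) (auto simp: ann_def ramp_def active_set_def ramp_set_def fun_eq_iff)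
next
  case False
  define v where "v = 2 * b - a - p"
  define \<eta> :: "real^4" where "\<eta> = vector [-1, v, -S, c + S * (v - a)]"
  have \<eta>: "\<eta>$1 = -1" "\<eta>$2 = v" "\<eta>$3 = -S" "\<eta>$4 = c + S * (v - a)"
    by (simp_all add: \<eta>_def vector_def)
  have "ann \<eta> x = c + S * ramp a b p x" for x
  proof -
    have "ann \<eta> x = c + S * (v - a) - S * max (v - x) 0"
      by (simp add: ann_def \<eta>)
    also have "max (v - x) 0 = (v - a) - min (x - a) (v - a)"
      by (simp add: max_def min_def)
    also have "min (x - a) (v - a) = ramp a b p x"
      using False by (simp add: ramp_def v_def)
    finally show ?thesis
      by (simp add: algebra_simps)
  qed
  moreover have "active_set a b \<eta> = ramp_set a b p"
    using False by (auto simp: active_set_def ramp_set_def \<eta> v_def)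
  ultimately show ?thesis
    by (intro exI[of _ \<eta>]) (auto simp: \<eta>)
qed

lemma emeasure_symdiff_ramp_set:
  "emeasure lborel (symdiff (ramp_set a b p) (ramp_set a b q)) \<le> ennreal \<bar>p - q\<bar>"
proof -
  have *: "emeasure lborel (symdiff (ramp_set a b p) (ramp_set a b q)) \<le> ennreal (q - p)"
    if "p \<le> q" for p q
  proof -
    consider "q \<le> b - a" | "b - a < p" | "p \<le> b - a" "b - a < q"
      by linarith
    then show ?thesis
    proof cases
      case 1
      then have "symdiff (ramp_set a b p) (ramp_set a b q) \<subseteq> {b - q..b - p}"
        using \<open>p \<le> q\<close> by (auto simp: symdiff_def ramp_set_def)
      then show ?thesis
        using \<open>p \<le> q\<close> by (auto dest!: emeasure_mono[of _ _ lborel])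
    next
      case 2
      then have "symdiff (ramp_set a b p) (ramp_set a b q) \<subseteq> {2 * b - a - q..2 * b - a - p}"
        using \<open>p \<le> q\<close> by (auto simp: symdiff_def ramp_set_def)
      then show ?thesis
        using \<open>p \<le> q\<close> by (auto dest!: emeasure_mono[of _ _ lborel])
    next
      case 3
      then have "symdiff (ramp_set a b p) (ramp_set a b q) \<subseteq> {a..b - p} \<union> {2 * b - a - q..b}"
        by (auto simp: symdiff_def ramp_set_def)
      then have "emeasure lborel (symdiff (ramp_set a b p) (ramp_set a b q))
          \<le> emeasure lborel ({a..b - p} \<union> {2 * b - a - q..b})"
        by (rule emeasure_mono) simp
      also have "\<dots> \<le> emeasure lborel {a..b - p} + emeasure lborel {2 * b - a - q..b}"
        by (rule emeasure_subadditive) simp_all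
      also have "\<dots> = ennreal (q - p)"
        using 3 by (simp flip: ennreal_plus)
      finally show ?thesis .
    qed
  qed
  show ?thesis
    using *[of p q] *[of q p] by (cases "p \<le> q") (auto simp: symdiff_def Un_commute)
qed

lemma emeasure_symdiff_ramp_set_le:
  assumes "symdiff I (ramp_set a b p) \<subseteq> {a, b}"
  shows "emeasure lborel (symdiff I (ramp_set a b q)) \<le> ennreal \<bar>p - q\<bar>"
proof -
  have "ramp_set a b r \<in> sets lborel" for r
    by (simp add: ramp_set_def)
  then have measurable: "symdiff (ramp_set a b p) (ramp_set a b q) \<in> sets lborel"
    unfolding symdiff_def by (intro sets.Un sets.Diff)
  have "symdiff I (ramp_set a b q) \<subseteq> {a, b} \<union> symdiff (ramp_set a b p) (ramp_set a b q)"
    using assms by (auto simp: symdiff_def)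
  then have "emeasure lborel (symdiff I (ramp_set a b q))
      \<le> emeasure lborel ({a, b} \<union> symdiff (ramp_set a b p) (ramp_set a b q))"
    by (rule emeasure_mono) (rule sets.Un[OF _ measurable], simp)
  also have "\<dots> \<le> emeasure lborel {a, b} + emeasure lborel (symdiff (ramp_set a b p) (ramp_set a b q))"
    by (rule emeasure_subadditive[OF _ measurable]) simp
  also have "\<dots> \<le> ennreal \<bar>p - q\<bar>"
    using emeasure_symdiff_ramp_set[of a b p q] by (simp add: emeasure_lborel_countable)
  finally show ?thesis .
qed

lemma has_integral_strictly_between_0_and_length:
  fixes r :: "real \<Rightarrow> real"
  assumes "a < b" "continuous_on {a..b} r" "\<And>x. x \<in> {a..b} \<Longrightarrow> 0 \<le> r x \<and> r x \<le> 1"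
    and "r a = 0" "r b = 1" "(r has_integral I) {a..b}"
  shows "0 < I \<and> I < b - a"
proof -
  have "I \<noteq> 0"
  proof
    assume "I = 0"
    then have "r b = 0"
      using assms by (intro has_integral_0_cbox_imp_0[of a b r]) auto
    with assms(5) show False by simp
  qed
  moreover have "I \<noteq> b - a"
  proof
    assume "I = b - a"
    then have "((\<lambda>x. 1 - r x) has_integral 0) {a..b}"
      using has_integral_diff[OF has_integral_const_real[of 1 a b] assms(6)] assms(1) by simp
    moreover have "continuous_on {a..b} (\<lambda>x. 1 - r x)"
      by (intro continuous_intros assms(2))
    ultimately have "1 - r a = 0"
      using assms by (intro has_integral_0_cbox_imp_0[of a b "\<lambda>x. 1 - r x"]) auto
    with assms(4) show False by simp
  qed
  moreover have "0 \<le> I"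
    using assms by (intro has_integral_nonneg[OF assms(6)]) auto
  moreover have "I \<le> b - a"
    using has_integral_le[OF assms(6) has_integral_const_real[of 1 a b]] assms by auto
  ultimately show ?thesis by linarith
qed

lemma le_SUP_compact_continuous:
  fixes f :: "'a::topological_space \<Rightarrow> real"
  assumes "compact S" "continuous_on S f" "x \<in> S"
  shows "f x \<le> (SUP y\<in>S. f y)"
proof -
  have "compact (f ` S)"
    using compact_continuous_image[OF assms(2,1)] .
  then have "bdd_above (f ` S)"
    by (rule bounded_imp_bdd_above[OF compact_imp_bounded])
  then show ?thesis
    by (rule cSUP_upper[OF assms(3)])
qed

locale ramp_approximation =
  fixes a b :: real and s P e :: "nat \<Rightarrow> real" and H :: "real \<Rightarrow> real"
  assumes interval: "a < b"
    and param_range: "\<And>n. 0 \<le> P n" "\<And>n. P n \<le> 2 * (b - a)"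
    and uniform_bound: "\<And>n x. x \<in> {a..b} \<Longrightarrow> \<bar>s n * ramp a b (P n) x - H x\<bar> \<le> e n"
    and bound_tendsto: "e \<longlonglongrightarrow> 0"
    and continuous: "continuous_on {a..b} H"
    and nontrivial: "\<exists>y \<in> {a..b}. H y \<noteq> 0"
begin

lemma approx_tendsto:
  assumes "x \<in> {a..b}"
  shows "(\<lambda>n. s n * ramp a b (P n) x) \<longlonglongrightarrow> H x"
proof (rule LIM_zero_cancel, rule Lim_null_comparison[OF always_eventually bound_tendsto])
  show "\<forall>n. norm (s n * ramp a b (P n) x - H x) \<le> e n"
    using uniform_bound[OF assms] by simp
qed

lemma H_left_end: "H a = 0"
proof -
  have "(\<lambda>n. s n * ramp a b (P n) a) = (\<lambda>n. 0)"
    by (simp add: ramp_left_end[OF param_range(2)])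
  then show ?thesis
    using approx_tendsto[of a] interval by (simp add: LIMSEQ_const_iff)
qed

lemma H_between:
  assumes "y \<in> {a..b}"
  shows "0 \<le> H y * (H b - H y)"
proof (rule LIMSEQ_le_const)
  show "(\<lambda>n. s n * ramp a b (P n) y * (s n * ramp a b (P n) b - s n * ramp a b (P n) y))
      \<longlonglongrightarrow> H y * (H b - H y)"
    using assms interval by (intro tendsto_intros approx_tendsto) auto
  show "\<exists>N. \<forall>n\<ge>N. 0 \<le> s n * ramp a b (P n) y * (s n * ramp a b (P n) b - s n * ramp a b (P n) y)"
  proof (intro exI allI impI)
    fix n
    have "s n * ramp a b (P n) y * (s n * ramp a b (P n) b - s n * ramp a b (P n) y)
        = (s n)\<^sup>2 * (ramp a b (P n) y * (ramp a b (P n) b - ramp a b (P n) y))"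
      by (simp add: power2_eq_square algebra_simps)
    also have "\<dots> \<ge> 0"
      using ramp_bounds[OF assms param_range] by simp
    finally show "0 \<le> s n * ramp a b (P n) y * (s n * ramp a b (P n) b - s n * ramp a b (P n) y)" .
  qed
qed

lemma H_right_end_nonzero: "H b \<noteq> 0"
proof
  assume "H b = 0"
  then have "H y = 0" if "y \<in> {a..b}" for y
    using H_between[OF that] by (auto simp: mult_le_0_iff)
  with nontrivial show False by blast
qed

lemma H_has_integral: "(H has_integral integral {a..b} H) {a..b}"
  using integrable_integral[OF integrable_continuous_interval[OF continuous]] .

lemma integral_tendsto: "(\<lambda>n. s n * ramp a b (P n) b * P n / 2) \<longlonglongrightarrow> integral {a..b} H"
proof (rule LIM_zero_cancel, rule Lim_null_comparison[OF always_eventually])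
  show "\<forall>n. norm (s n * ramp a b (P n) b * P n / 2 - integral {a..b} H) \<le> e n * (b - a)"
  proof
    fix n
    have "((\<lambda>x. s n * ramp a b (P n) x) has_integral s n * (P n * ramp a b (P n) b / 2)) {a..b}"
      by (rule has_integral_mult_right[OF has_integral_ramp[OF param_range]])
    then have diff: "((\<lambda>x. s n * ramp a b (P n) x - H x) has_integral
        s n * ramp a b (P n) b * P n / 2 - integral {a..b} H) (cbox a b)"
      by (simp add: has_integral_eq_rhs[OF has_integral_diff[OF _ H_has_integral]])
    have "0 \<le> e n"
      using uniform_bound[of a n] interval by auto
    from has_integral_bound[OF this diff] uniform_bound interval
    show "norm (s n * ramp a b (P n) b * P n / 2 - integral {a..b} H) \<le> e n * (b - a)"
      by simp
  qed
  show "(\<lambda>n. e n * (b - a)) \<longlonglongrightarrow> 0"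
    using tendsto_mult_left_zero[OF bound_tendsto] by simp
qed

(* The integral of the ramp with parameter p is p times its height over 2, so the limit
   parameter can be read off the integral of H. *)
definition limit_param :: real where
  "limit_param = 2 * integral {a..b} H / H b"

lemma param_tendsto: "P \<longlonglongrightarrow> limit_param"
proof -
  have "(\<lambda>n. 2 * (s n * ramp a b (P n) b * P n / 2) / (s n * ramp a b (P n) b)) \<longlonglongrightarrow> limit_param"
    unfolding limit_param_def using interval H_right_end_nonzero
    by (intro tendsto_intros integral_tendsto approx_tendsto) auto
  moreover have "eventually (\<lambda>n. s n * ramp a b (P n) b \<noteq> 0) sequentially"
    using approx_tendsto[of b] interval H_right_end_nonzero by (intro tendsto_imp_eventually_ne) auto
  then have "eventually (\<lambda>n. 2 * (s n * ramp a b (P n) b * P n / 2) / (s n * ramp a b (P n) b) = P n) sequentially"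
    by eventually_elim simp
  ultimately show ?thesis
    by (rule Lim_transform_eventually)
qed

lemma limit_param_range: "0 < limit_param \<and> limit_param < 2 * (b - a)"
proof -
  define r where "r x = H x / H b" for x
  have "0 \<le> r x \<and> r x \<le> 1" if "x \<in> {a..b}" for x
  proof -
    have "r x * (1 - r x) = H x * (H b - H x) / (H b)\<^sup>2"
      using H_right_end_nonzero by (simp add: r_def power2_eq_square field_simps)
    also have "\<dots> \<ge> 0"
      using H_between[OF that] by simp
    finally show ?thesis
      by (simp add: zero_le_mult_iff) linarith
  qed
  moreover have "continuous_on {a..b} r"
    unfolding r_def using H_right_end_nonzero by (intro continuous_intros continuous) auto
  moreover have "(r has_integral limit_param / 2) {a..b}"
    using has_integral_divide[OF H_has_integral, of "H b"] by (simp add: r_def[abs_def] limit_param_def)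
  moreover have "r a = 0" "r b = 1"
    using H_left_end H_right_end_nonzero by (simp_all add: r_def)
  ultimately have "0 < limit_param / 2 \<and> limit_param / 2 < b - a"
    using has_integral_strictly_between_0_and_length[OF interval] by blast
  then show ?thesis by simp
qed

lemma scale_tendsto: "s \<longlonglongrightarrow> H b / ramp a b limit_param b"
proof -
  have pos: "0 < ramp a b limit_param b"
    using limit_param_range by (simp add: ramp_right_end_pos)
  have height: "(\<lambda>n. ramp a b (P n) b) \<longlonglongrightarrow> ramp a b limit_param b"
    using interval by (intro tendsto_ramp param_tendsto) auto
  have "(\<lambda>n. s n * ramp a b (P n) b / ramp a b (P n) b) \<longlonglongrightarrow> H b / ramp a b limit_param b"
    using interval pos by (intro tendsto_divide approx_tendsto height) auto
  moreover have "eventually (\<lambda>n. ramp a b (P n) b \<noteq> 0) sequentially"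
    using height pos by (intro tendsto_imp_eventually_ne) auto
  then have "eventually (\<lambda>n. s n * ramp a b (P n) b / ramp a b (P n) b = s n) sequentially"
    by eventually_elim simp
  ultimately show ?thesis
    by (rule Lim_transform_eventually)
qed

lemma converges_to_ramp:
  obtains p S where "P \<longlonglongrightarrow> p" "s \<longlonglongrightarrow> S" "\<And>x. x \<in> {a..b} \<Longrightarrow> H x = S * ramp a b p x"
proof
  fix x assume x: "x \<in> {a..b}"
  have "(\<lambda>n. s n * ramp a b (P n) x) \<longlonglongrightarrow> H b / ramp a b limit_param b * ramp a b limit_param x"
    using x by (intro tendsto_intros scale_tendsto tendsto_ramp param_tendsto)
  then show "H x = H b / ramp a b limit_param b * ramp a b limit_param x"
    using approx_tendsto[OF x] LIMSEQ_unique by blast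
qed (rule param_tendsto, rule scale_tendsto)

end

lemma continuous_on_ann: "continuous_on S (ann \<theta>)"
  unfolding ann_def by (intro continuous_intros)

lemma ann_seq_eq_ramp:
  fixes \<theta> :: "nat \<Rightarrow> real^4"
  assumes "a < b"
  obtains P where "\<And>n. P n \<in> {0..2 * (b - a)}"
    "\<And>n x. x \<in> {a..b} \<Longrightarrow> ann (\<theta> n) x = ann (\<theta> n) a + \<theta> n $ 1 * \<theta> n $ 3 * ramp a b (P n) x"
    "\<And>n. symdiff (active_set a b (\<theta> n)) (ramp_set a b (P n)) \<subseteq> {a, b}"
proof -
  have "\<forall>n. \<exists>p. p \<in> {0..2 * (b - a)}
      \<and> (\<forall>x\<in>{a..b}. ann (\<theta> n) x = ann (\<theta> n) a + \<theta> n $ 1 * \<theta> n $ 3 * ramp a b p x)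
      \<and> symdiff (active_set a b (\<theta> n)) (ramp_set a b p) \<subseteq> {a, b}"
    using ann_eq_ramp[OF assms] by blast
  with that show ?thesis
    by metis
qed

lemma ramp_approximation_of_uniform_limit:
  fixes \<theta> :: "nat \<Rightarrow> real^4"
  assumes "a < b" "continuous_on {a..b} h"
    and "(\<lambda>n. SUP x\<in>{a..b}. \<bar>ann (\<theta> n) x - h x\<bar>) \<longlonglongrightarrow> 0"
    and "\<exists>x\<in>{a..b}. \<exists>y\<in>{a..b}. h x \<noteq> h y"
    and "\<And>n. P n \<in> {0..2 * (b - a)}"
    and "\<And>n x. x \<in> {a..b} \<Longrightarrow> ann (\<theta> n) x = ann (\<theta> n) a + \<theta> n $ 1 * \<theta> n $ 3 * ramp a b (P n) x"
  shows "ramp_approximation a b (\<lambda>n. \<theta> n $ 1 * \<theta> n $ 3) P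
    (\<lambda>n. 2 * (SUP x\<in>{a..b}. \<bar>ann (\<theta> n) x - h x\<bar>)) (\<lambda>x. h x - h a)"
proof
  have near: "\<bar>ann (\<theta> n) x - h x\<bar> \<le> (SUP x\<in>{a..b}. \<bar>ann (\<theta> n) x - h x\<bar>)" if "x \<in> {a..b}" for n x
    using that assms(2) by (intro le_SUP_compact_continuous continuous_intros continuous_on_ann) auto
  show "\<bar>\<theta> n $ 1 * \<theta> n $ 3 * ramp a b (P n) x - (h x - h a)\<bar>
      \<le> 2 * (SUP x\<in>{a..b}. \<bar>ann (\<theta> n) x - h x\<bar>)" if "x \<in> {a..b}" for n x
    using near[OF that, of n] near[of a n] assms(6)[OF that, of n] assms(1) by simp
  show "(\<lambda>n. 2 * (SUP x\<in>{a..b}. \<bar>ann (\<theta> n) x - h x\<bar>)) \<longlonglongrightarrow> 0"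
    using tendsto_mult_right_zero[OF assms(3)] by simp
  show "continuous_on {a..b} (\<lambda>x. h x - h a)"
    by (intro continuous_intros assms(2))
  from assms(4) obtain x y where "x \<in> {a..b}" "y \<in> {a..b}" "h x \<noteq> h y"
    by blast
  moreover have "h x - h a \<noteq> 0 \<or> h y - h a \<noteq> 0"
    using \<open>h x \<noteq> h y\<close> by auto
  ultimately show "\<exists>y\<in>{a..b}. h y - h a \<noteq> 0"
    by blast
qed (use assms(1,5) in auto)

lemma tendsto_emeasure_symdiff_ramp_set:
  assumes "\<And>n. symdiff (I n) (ramp_set a b (P n)) \<subseteq> {a, b}" "P \<longlonglongrightarrow> p"
  shows "(\<lambda>n. emeasure lborel (symdiff (I n) (ramp_set a b p))) \<longlonglongrightarrow> 0"
proof (rule tendsto_sandwich[OF always_eventually always_eventually tendsto_const])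
  show "\<forall>n. emeasure lborel (symdiff (I n) (ramp_set a b p)) \<le> ennreal \<bar>P n - p\<bar>"
    using emeasure_symdiff_ramp_set_le[OF assms(1)] by blast
  show "(\<lambda>n. ennreal \<bar>P n - p\<bar>) \<longlonglongrightarrow> 0"
    using tendsto_ennrealI[OF tendsto_rabs_zero[OF LIM_zero[OF assms(2)]]] by simp
qed simp

theorem lemma6p4:
  fixes a b :: real and \<theta> :: "nat \<Rightarrow> real^4" and h :: "real \<Rightarrow> real"
  assumes "a < b"
    and "continuous_on {a..b} h"
    and "(\<lambda>n. SUP x\<in>{a..b}. \<bar>ann (\<theta> n) x - h x\<bar>) \<longlonglongrightarrow> 0"
    and "\<exists>x\<in>{a..b}. \<exists>y\<in>{a..b}. h x \<noteq> h y"
  shows "\<exists>\<eta> :: real^4. (\<forall>x\<in>{a..b}. ann \<eta> x = h x)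
           \<and> (\<lambda>n. \<bar>\<theta> n $ 1 * \<theta> n $ 3 - \<eta>$1 * \<eta>$3\<bar>) \<longlonglongrightarrow> 0
           \<and> (\<lambda>n. emeasure lborel (symdiff (active_set a b (\<theta> n)) (active_set a b \<eta>))) \<longlonglongrightarrow> 0"
proof -
  obtain P where P: "\<And>n. P n \<in> {0..2 * (b - a)}"
    "\<And>n x. x \<in> {a..b} \<Longrightarrow> ann (\<theta> n) x = ann (\<theta> n) a + \<theta> n $ 1 * \<theta> n $ 3 * ramp a b (P n) x"
    "\<And>n. symdiff (active_set a b (\<theta> n)) (ramp_set a b (P n)) \<subseteq> {a, b}"
    using ann_seq_eq_ramp[OF assms(1)] by blast
  interpret ramp_approximation a b "\<lambda>n. \<theta> n $ 1 * \<theta> n $ 3" P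
    "\<lambda>n. 2 * (SUP x\<in>{a..b}. \<bar>ann (\<theta> n) x - h x\<bar>)" "\<lambda>x. h x - h a"
    by (rule ramp_approximation_of_uniform_limit[OF assms P(1,2)])
  obtain p S where conv: "P \<longlonglongrightarrow> p" "(\<lambda>n. \<theta> n $ 1 * \<theta> n $ 3) \<longlonglongrightarrow> S"
    and limit: "\<And>x. x \<in> {a..b} \<Longrightarrow> h x - h a = S * ramp a b p x"
    using converges_to_ramp by blast
  obtain \<eta> :: "real^4" where \<eta>: "ann \<eta> = (\<lambda>x. h a + S * ramp a b p x)" "\<eta>$1 * \<eta>$3 = S"
    "active_set a b \<eta> = ramp_set a b p"
    using ann_ramp_network[of "h a" S a b p] by (elim exE conjE)
  have "\<forall>x\<in>{a..b}. ann \<eta> x = h x"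
    by (simp add: \<eta>(1) limit[symmetric])
  moreover have "(\<lambda>n. \<bar>\<theta> n $ 1 * \<theta> n $ 3 - \<eta>$1 * \<eta>$3\<bar>) \<longlonglongrightarrow> 0"
    unfolding \<eta>(2) by (intro tendsto_rabs_zero LIM_zero conv(2))
  moreover have "(\<lambda>n. emeasure lborel (symdiff (active_set a b (\<theta> n)) (active_set a b \<eta>))) \<longlonglongrightarrow> 0"
    unfolding \<eta>(3) by (rule tendsto_emeasure_symdiff_ramp_set[OF P(3) conv(1)])
  ultimately show ?thesis
    by blast
qed

end
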